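(* Let $\gamma_n=o(n)$ and $\lambda_n=\Omega(\sqrt{n})$. Let $K:\mathbb{N}_0\to\mathbb{N}_0$, $n\mapsto K_n$, be a scaling and let \[ r_3(\gamma_n,\lambda_n) = 1+\frac{\log(1+\gamma_n/\lambda_n)}{\log 2 + 1/2}. \] If $K_n > r_3(\gamma_n,\lambda_n)$ for all $n$, then \[ \lim_{n\to\infty} \mathbb{P}\big[\,|C_{max}(n,K_n,\gamma_n)| > n-\gamma_n-\lambda_n\,\big] = 1. \]
   Context: Random K-out graph $\mathbb{H}(n;K_n)$: on vertex set $V=\{v_1,\dots,v_n\}$ with labels $\mathcal{N}=\{1,\dots,n\}$, each node $v_i$ independently selects a set $\Gamma_{n,i}\subseteq \mathcal{N}\setminus\{i\}$ of $K_n$ distinct labels uniformly at random (the sets $\Gamma_{n,1},\dots,\Gamma_{n,n}$ are mutually independent). Distinct nodes $v_i,v_j$ are adjacent if $j\in\Gamma_{n,i}$ or $i\in\Gamma_{n,j}$ (undirected graph). The graph $\mathbb{H}(n;K_n,\gamma_n)$ is obtained by choosing a set $D\subset V$ of $\gamma_n$ nodes uniformly at random and deleting them: it has vertex set $R=V\setminus D$, and two distinct vertices of $R$ are adjacent iff they are adjacent in $\mathbb{H}(n;K_n)$. $C_{max}(n,K_n,\gamma_n)$ denotes the vertex set of a largest connected component of $\mathbb{H}(n;K_n,\gamma_n)$. $\log$ is the natural logarithm; Landau notation is as $n\to\infty$. *)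

theory Defs
  imports "HOL-Probability.Probability" "HOL-Library.Landau_Symbols"
begin

text \<open>Random K-out graph on labels 1..n: node i picks a uniformly random K-subset of
  {1..n} - {i}; the choices are mutually independent (product pmf).\<close>

definition kout_adj :: "(nat \<Rightarrow> nat set) \<Rightarrow> nat \<Rightarrow> nat \<Rightarrow> bool" where
  "kout_adj G i j \<longleftrightarrow> i \<noteq> j \<and> (j \<in> G i \<or> i \<in> G j)"

definition surv_adj :: "(nat \<Rightarrow> nat set) \<Rightarrow> nat set \<Rightarrow> nat \<Rightarrow> nat \<Rightarrow> bool" where
  "surv_adj G R i j \<longleftrightarrow> i \<in> R \<and> j \<in> R \<and> kout_adj G i j"

definition component :: "(nat \<Rightarrow> nat set) \<Rightarrow> nat set \<Rightarrow> nat \<Rightarrow> nat set" where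
  "component G R v = {u \<in> R. (surv_adj G R)\<^sup>*\<^sup>* v u}"

definition cmax_size :: "(nat \<Rightarrow> nat set) \<Rightarrow> nat set \<Rightarrow> nat" where
  "cmax_size G R = Max (insert 0 ((\<lambda>v. card (component G R v)) ` R))"

definition selection_pmf :: "nat \<Rightarrow> nat \<Rightarrow> (nat \<Rightarrow> nat set) pmf" where
  "selection_pmf n K =
     Pi_pmf {1..n} {} (\<lambda>i. pmf_of_set {S. S \<subseteq> {1..n} - {i} \<and> card S = K})"

definition deletion_pmf :: "nat \<Rightarrow> nat \<Rightarrow> nat set pmf" where
  "deletion_pmf n g = pmf_of_set {D. D \<subseteq> {1..n} \<and> card D = g}"

definition prob_cmax_gt :: "nat \<Rightarrow> nat \<Rightarrow> nat \<Rightarrow> real \<Rightarrow> real" where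
  "prob_cmax_gt n K g t =
     measure_pmf.prob (pair_pmf (selection_pmf n K) (deletion_pmf n g))
       {(G, D). real (cmax_size G ({1..n} - D)) > t}"

definition r3 :: "real \<Rightarrow> real \<Rightarrow> real" where
  "r3 g l = 1 + ln (1 + g / l) / (ln 2 + 1/2)"

end

theory Submission
  imports Defs "HOL-Real_Asymp.Real_Asymp"
begin

text \<open>Fix the deleted set \<open>D\<close> and let \<open>R\<close> be the \<open>r = n - \<gamma>\<close> surviving nodes. If every
  component of the surviving graph has at most \<open>r - \<lambda>\<close> nodes, then the components can be
  grouped into a set \<open>S \<subseteq> R\<close> with \<open>\<lambda>/2 \<le> |S| \<le> r/2\<close> and no edge between \<open>S\<close> and \<open>R - S\<close>.
  For a fixed \<open>S\<close> of size \<open>m\<close> this requires every node of \<open>S\<close> to choose its \<open>K\<close> labels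
  outside \<open>R - S\<close> and every node of \<open>R - S\<close> to choose outside \<open>S\<close>. A union bound over all
  such \<open>S\<close>, combined with \<open>binomial(r, m) \<le> (e r/m)\<^sup>m\<close>, bounds the contribution of size \<open>m\<close>
  by \<open>b\<^sup>m\<close>, and the hypothesis \<open>K > r\<^sub>3(\<gamma>, \<lambda>)\<close>, i.e.
  \<open>1 + \<gamma>/\<lambda> < (2 \<surd>e)\<^bsup>K-1\<^esup>\<close>, forces \<open>b \<le> 9/10\<close> once \<open>\<gamma> \<le> n/1000\<close>. Summing over
  \<open>m \<ge> \<lambda>/2\<close> gives failure probability at most \<open>(n + 1) (9/10)\<^bsup>\<lambda>/2\<^esup>\<close>, which tends
  to \<open>0\<close> because \<open>\<lambda> = \<Omega>(\<surd>n)\<close>.\<close>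

definition separated :: "(nat \<Rightarrow> nat set) \<Rightarrow> nat set \<Rightarrow> nat set \<Rightarrow> bool" where
  "separated G R S \<longleftrightarrow> S \<subseteq> R \<and> (\<forall>u\<in>S. \<forall>w\<in>R - S. \<not> kout_adj G u w)"

lemma kout_adj_commute: "kout_adj G u w \<longleftrightarrow> kout_adj G w u"
  unfolding kout_adj_def by auto

lemma separated_Diff: "separated G R S \<Longrightarrow> separated G R (R - S)"
  unfolding separated_def using kout_adj_commute by blast

lemma separated_Un: "separated G R S \<Longrightarrow> separated G R T \<Longrightarrow> separated G R (S \<union> T)"
  unfolding separated_def by blast

lemma component_subset: "component G R v \<subseteq> R"
  unfolding component_def by auto

lemma in_component: "v \<in> R \<Longrightarrow> v \<in> component G R v"
  unfolding component_def by auto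

lemma separated_component: "separated G R (component G R v)"
  unfolding separated_def component_def surv_adj_def
  by (auto intro: rtranclp.rtrancl_into_rtrancl)

lemma component_disjoint_separated:
  assumes "separated G R S" "v \<notin> S"
  shows "component G R v \<inter> S = {}"
proof -
  have "w \<notin> S" if "(surv_adj G R)\<^sup>*\<^sup>* v w" for w
    using that
  proof (induction rule: rtranclp_induct)
    case (step y z)
    then show ?case
      using assms(1) kout_adj_commute unfolding separated_def surv_adj_def by blast
  qed (use assms in simp)
  then show ?thesis
    unfolding component_def by blast
qed

lemma card_component_le_cmax_size: "finite R \<Longrightarrow> v \<in> R \<Longrightarrow> card (component G R v) \<le> cmax_size G R"
  unfolding cmax_size_def by (intro Max_ge) auto

lemma exists_balanced_separated:
  fixes lam :: real
  assumes "finite R" and "0 < lam" and "lam \<le> real (card R)"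
    and small: "\<And>v. v \<in> R \<Longrightarrow> real (card (component G R v)) \<le> real (card R) - lam"
  shows "\<exists>S. separated G R S \<and> lam \<le> 2 * real (card S) \<and> 2 * card S \<le> card R"
proof (rule ccontr)
  txt \<open>Take a largest separated \<open>S\<close> with \<open>2 |S| \<le> |R|\<close>. If \<open>2 |S| < \<lambda>\<close>, adding the
    component of a node outside \<open>S\<close> either keeps the size bound, or its complement in \<open>R\<close>
    (of size \<open>\<ge> \<lambda> - |S| > |S|\<close>) does; both contradict maximality.\<close>
  assume contra: "\<not> ?thesis"
  define F where "F = {S. separated G R S \<and> 2 * card S \<le> card R}"
  have "finite F"
    unfolding F_def separated_def using \<open>finite R\<close> by (rule_tac finite_subset[of _ "Pow R"]) auto
  moreover have "{} \<in> F"
    unfolding F_def separated_def by auto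
  ultimately have "Max (card ` F) \<in> card ` F"
    by (intro Max_in) auto
  then obtain S where "S \<in> F" and "card S = Max (card ` F)"
    by auto
  with \<open>finite F\<close> have S_max: "\<And>T. T \<in> F \<Longrightarrow> card T \<le> card S"
    by simp
  from \<open>S \<in> F\<close> have "separated G R S" "2 * card S \<le> card R" "S \<subseteq> R"
    unfolding F_def separated_def by auto
  then have S_small: "2 * real (card S) < lam"
    using contra by force
  have "finite S"
    using \<open>finite R\<close> \<open>S \<subseteq> R\<close> finite_subset by auto
  have "\<not> R \<subseteq> S"
    using card_mono[OF \<open>finite S\<close>, of R] S_small \<open>lam \<le> real (card R)\<close> by linarith
  then obtain v where "v \<in> R" "v \<notin> S"
    by blast
  define C where "C = component G R v"
  have "separated G R (S \<union> C)"
    unfolding C_def using \<open>separated G R S\<close> separated_component by (rule separated_Un)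
  have "C \<subseteq> R" "v \<in> C" "C \<inter> S = {}"
    unfolding C_def using component_subset in_component component_disjoint_separated
      \<open>v \<in> R\<close> \<open>v \<notin> S\<close> \<open>separated G R S\<close> by auto
  moreover have "finite C"
    using \<open>finite R\<close> \<open>C \<subseteq> R\<close> finite_subset by auto
  ultimately have card_SC: "card (S \<union> C) = card S + card C" and "card C \<ge> 1"
    using \<open>finite S\<close> by (auto simp: card_Un_disjoint inf_commute Suc_le_eq card_gt_0_iff)
  show False
  proof (cases "2 * card (S \<union> C) \<le> card R")
    case True
    then have "S \<union> C \<in> F"
      unfolding F_def using \<open>separated G R (S \<union> C)\<close> by blast
    then show False
      using S_max card_SC \<open>card C \<ge> 1\<close> by fastforce
  next
    case False
    define T where "T = R - (S \<union> C)"
    have "card (S \<union> C) \<le> card R"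
      using \<open>S \<subseteq> R\<close> \<open>C \<subseteq> R\<close> \<open>finite R\<close> by (intro card_mono) auto
    then have "card T = card R - card S - card C"
      unfolding T_def using \<open>S \<subseteq> R\<close> \<open>C \<subseteq> R\<close> \<open>finite R\<close> card_SC
      by (simp add: card_Diff_subset finite_subset)
    moreover have "real (card C) \<le> real (card R) - lam"
      unfolding C_def using small \<open>v \<in> R\<close> .
    ultimately have "card S < card T" "2 * card T \<le> card R"
      using S_small False card_SC \<open>card (S \<union> C) \<le> card R\<close> by linarith+
    moreover have "T \<in> F"
      unfolding F_def using \<open>2 * card T \<le> card R\<close> \<open>separated G R (S \<union> C)\<close>
      by (simp add: T_def separated_Diff)
    ultimately show False
      using S_max by fastforce
  qed
qed

lemma binomial_ratio_le_power:
  assumes "a \<le> b"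
  shows "real (a choose K) / real (b choose K) \<le> (real a / real b) ^ K"
proof (cases "K \<le> a")
  case False
  then show ?thesis by (simp add: binomial_eq_0)
next
  case True
  have "real (a choose K) / real (b choose K) = (\<Prod>i = 0..<K. real (a - i) / real (b - i))"
    unfolding binomial_altdef_of_nat[OF True] binomial_altdef_of_nat[OF order.trans[OF True assms]]
      prod_dividef[symmetric]
    by (intro prod.cong) auto
  also have "\<dots> \<le> (\<Prod>i = 0..<K. real a / real b)"
  proof (intro prod_mono conjI)
    fix i assume "i \<in> {0..<K}"
    then have "i < a" "i < b" using True assms by auto
    then show "real (a - i) / real (b - i) \<le> real a / real b"
      using assms by (simp add: of_nat_diff divide_simps algebra_simps mult_right_mono)
  qed simp
  finally show ?thesis by simp
qed

lemma prob_subset_disjoint_le: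
  assumes "finite A" "T \<subseteq> A" "K \<le> card A"
  shows "measure_pmf.prob (pmf_of_set {S. S \<subseteq> A \<and> card S = K}) {S. S \<inter> T = {}}
           \<le> (1 - real (card T) / real (card A)) ^ K"
proof -
  define F where "F = {S. S \<subseteq> A \<and> card S = K}"
  have card_F: "card F = card A choose K"
    unfolding F_def using n_subsets[OF assms(1)] .
  have "finite F"
    unfolding F_def using assms(1) by (rule_tac finite_subset[of _ "Pow A"]) auto
  moreover have "F \<noteq> {}"
    using card_F assms(3) by fastforce
  moreover have "F \<inter> {S. S \<inter> T = {}} = {S. S \<subseteq> A - T \<and> card S = K}"
    unfolding F_def by auto
  moreover have "card (A - T) = card A - card T"
    using assms by (simp add: card_Diff_subset finite_subset)
  ultimately have "measure_pmf.prob (pmf_of_set F) {S. S \<inter> T = {}}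
      = real ((card A - card T) choose K) / real (card A choose K)"
    using assms(1) by (simp add: measure_pmf_of_set n_subsets card_F)
  also have "\<dots> \<le> (real (card A - card T) / real (card A)) ^ K"
    by (rule binomial_ratio_le_power) simp
  also have "\<dots> \<le> (1 - real (card T) / real (card A)) ^ K"
    using assms card_mono[of A T]
    by (intro power_mono) (simp_all add: of_nat_diff divide_simps)
  finally show ?thesis
    unfolding F_def .
qed

lemma prob_choice_disjoint_le:
  assumes "i \<in> {1..n}" "T \<subseteq> {1..n} - {i}" "K < n"
  shows "measure_pmf.prob (pmf_of_set {S. S \<subseteq> {1..n} - {i} \<and> card S = K}) {S. S \<inter> T = {}}
           \<le> (1 - real (card T) / real n) ^ K"
proof -
  have card_A: "card ({1..n} - {i}) = n - 1"
    using assms(1) by simp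
  have "card T \<le> n - 1"
    using card_mono[OF _ assms(2)] card_A by simp
  have "measure_pmf.prob (pmf_of_set {S. S \<subseteq> {1..n} - {i} \<and> card S = K}) {S. S \<inter> T = {}}
      \<le> (1 - real (card T) / real (n - 1)) ^ K"
    using prob_subset_disjoint_le[of "{1..n} - {i}" T K] assms card_A by simp
  also have "\<dots> \<le> (1 - real (card T) / real n) ^ K"
    using \<open>card T \<le> n - 1\<close> assms(3)
    by (intro power_mono) (auto simp: of_nat_diff divide_simps algebra_simps)
  finally show ?thesis .
qed

lemma prob_separated_le:
  assumes "K < n" "R \<subseteq> {1..n}" "S \<subseteq> R"
  shows "measure_pmf.prob (selection_pmf n K) {G. separated G R S}
           \<le> (1 - real (card R - card S) / real n) ^ (K * card S)
             * (1 - real (card S) / real n) ^ (K * (card R - card S))"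
proof -
  define T where "T i = (if i \<in> S then R - S else if i \<in> R then S else {})" for i
  define p where "p i = pmf_of_set {X. X \<subseteq> {1..n} - {i} \<and> card X = K}" for i
  define f where "f i = (1 - real (card (T i)) / real n) ^ K" for i
  have "finite R"
    using assms(2) finite_subset by blast
  have "{G. separated G R S} \<subseteq> Pi {1..n} (\<lambda>i. {X. X \<inter> T i = {}})"
  proof (intro subsetI Pi_I CollectI)
    fix G i assume "G \<in> {G. separated G R S}"
    then have "\<not> kout_adj G u w" if "u \<in> S" "w \<in> R - S" for u w
      using that unfolding separated_def by blast
    then show "G i \<inter> T i = {}"
      unfolding T_def kout_adj_def by auto
  qed
  then have "measure_pmf.prob (selection_pmf n K) {G. separated G R S}
      \<le> measure_pmf.prob (selection_pmf n K) (Pi {1..n} (\<lambda>i. {X. X \<inter> T i = {}}))"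
    by (intro measure_pmf.finite_measure_mono) auto
  also have "\<dots> = (\<Prod>i\<in>{1..n}. measure_pmf.prob (p i) {X. X \<inter> T i = {}})"
    unfolding selection_pmf_def p_def by (rule measure_Pi_pmf_Pi) simp
  also have "\<dots> \<le> (\<Prod>i\<in>{1..n}. f i)"
    unfolding p_def f_def using assms
    by (intro prod_mono conjI measure_nonneg prob_choice_disjoint_le) (auto simp: T_def)
  also have "\<dots> = (\<Prod>i\<in>{1..n} - R. f i) * ((\<Prod>i\<in>R - S. f i) * (\<Prod>i\<in>S. f i))"
    using assms \<open>finite R\<close> prod.subset_diff[of R "{1..n}" f] prod.subset_diff[of S R f] by simp
  also have "(\<Prod>i\<in>{1..n} - R. f i) = 1"
    using assms(3) unfolding f_def T_def by (intro prod.neutral) auto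
  also have "(\<Prod>i\<in>R - S. f i) = (1 - real (card S) / real n) ^ (K * (card R - card S))"
    using assms(3) \<open>finite R\<close> unfolding f_def T_def
    by (simp add: card_Diff_subset finite_subset power_mult)
  also have "(\<Prod>i\<in>S. f i) = (1 - real (card R - card S) / real n) ^ (K * card S)"
    using assms(3) \<open>finite R\<close> unfolding f_def T_def
    by (simp add: card_Diff_subset finite_subset power_mult)
  finally show ?thesis
    by (simp add: mult.commute)
qed

lemma set_deletion_pmf:
  assumes "g \<le> n"
  shows "set_pmf (deletion_pmf n g) = {D. D \<subseteq> {1..n} \<and> card D = g}"
proof -
  have "finite {D. D \<subseteq> {1..n} \<and> card D = g}"
    by (rule finite_subset[of _ "Pow {1..n}"]) auto
  moreover have "{D. D \<subseteq> {1..n} \<and> card D = g} \<noteq> {}"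
    using obtain_subset_with_card_n[of g "{1..n}"] assms by auto
  ultimately show ?thesis
    unfolding deletion_pmf_def by (rule set_pmf_of_set[rotated])
qed

lemma power_div_fact_le_exp:
  fixes x :: real
  assumes "0 \<le> x"
  shows "x ^ m / fact m \<le> exp x"
proof -
  have "(\<lambda>n. x ^ n / fact n) sums exp x"
    using exp_converges[of x] by (simp add: divide_inverse_commute)
  moreover have "(\<Sum>n\<in>{m}. x ^ n / fact n) \<le> (\<Sum>n. x ^ n / fact n)"
    using calculation assms by (intro sum_le_suminf) (auto simp: sums_iff)
  ultimately show ?thesis
    by (simp add: sums_iff)
qed

lemma binomial_le_exp_power:
  assumes "1 \<le> m"
  shows "real (r choose m) \<le> (exp 1 * real r / real m) ^ m"
proof (cases "m \<le> r")
  case False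
  then show ?thesis by (simp add: binomial_eq_0)
next
  case True
  have "real (r choose m) = real (fact r div fact (r - m)) / fact m"
    using binomial_fact[OF True]
    by (simp add: real_of_nat_div fact_dvd divide_divide_eq_left mult.commute)
  also have "\<dots> \<le> real r ^ m / fact m"
    using fact_div_fact_le_pow[OF True] by (intro divide_right_mono) (simp_all flip: of_nat_power)
  also have "\<dots> \<le> real r ^ m * (exp (real m) / real m ^ m)"
  proof -
    have "1 / fact m \<le> exp (real m) / real m ^ m"
      using power_div_fact_le_exp[of "real m" m] assms by (simp add: field_simps)
    then have "real r ^ m * (1 / fact m) \<le> real r ^ m * (exp (real m) / real m ^ m)"
      by (rule mult_left_mono) simp
    then show ?thesis
      by simp
  qed
  also have "\<dots> = (exp 1 * real r / real m) ^ m"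
    by (simp add: power_divide power_mult_distrib exp_of_nat_mult[symmetric] mult.commute)
  finally show ?thesis .
qed

lemma exp_half_le: "exp (1/2 :: real) \<le> 33/20"
proof -
  have "exp (1/2 :: real) ^ 2 = exp 1"
    by (simp add: power2_eq_square flip: exp_add)
  also have "\<dots> < (33/20) ^ 2"
    using e_less_272 by (simp add: power2_eq_square)
  finally show ?thesis
    by (rule power2_less_imp_less[THEN less_imp_le]) simp
qed

lemma exp_le_of_le_thousandth:
  fixes g :: real
  assumes "0 \<le> g" "g \<le> 1/1000"
  shows "exp g \<le> 1002/1000"
proof -
  have "exp g * (1 - g) \<le> exp g * exp (- g)"
    using exp_ge_add_one_self[of "- g"] by (intro mult_left_mono) auto
  then have "exp g * (1 - g) \<le> 1"
    by (simp add: exp_minus)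
  moreover have "exp g * (999/1000) \<le> exp g * (1 - g)"
    using assms by (intro mult_left_mono) auto
  ultimately show ?thesis
    by linarith
qed

lemma separation_rate_le:
  fixes \<gamma> x :: real and K :: nat
  assumes "0 \<le> \<gamma>" "\<gamma> \<le> 1/1000" "0 < x" "x \<le> 1/2" "2 \<le> K"
    and ratio: "1 + \<gamma> / x \<le> 2 * (2 * exp (1/2)) ^ (K - 1)"
  shows "exp 1 / x * (\<gamma> + x) ^ K * exp (- real K * (1 - \<gamma>) / 2) \<le> 9/10"
proof -
  txt \<open>The left-hand side is \<open>E H (1 + \<gamma>/x) B\<^bsup>K-1\<^esup>\<close>. For \<open>x \<le> 1/8\<close> the hypothesis trades
    \<open>1 + \<gamma>/x\<close> against \<open>(2 E)\<^bsup>K-1\<^esup>\<close>, leaving \<open>(2 E B)\<^bsup>K-1\<^esup>\<close> with \<open>2 E B \<le> 1\<close>; for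
    \<open>x > 1/8\<close> simply \<open>\<gamma>/x \<le> 8 \<gamma>\<close> and \<open>B \<le> 1\<close>.\<close>
  define E where "E = exp (1/2 :: real)"
  define H where "H = exp (\<gamma> / 2)"
  define k where "k = K - 1"
  define B where "B = (\<gamma> + x) * H / E"
  have "0 < E" "E \<le> 33/20" "1 \<le> H" "H \<le> E"
    unfolding E_def H_def using exp_half_le assms by auto
  have "H ^ 2 \<le> 1002/1000"
  proof -
    have "H ^ 2 = exp \<gamma>"
      unfolding H_def by (simp add: power2_eq_square flip: exp_add)
    then show ?thesis
      using assms exp_le_of_le_thousandth by simp
  qed
  have "0 \<le> B"
    unfolding B_def E_def H_def using assms by simp
  have "exp 1 / x * (\<gamma> + x) ^ K * exp (- real K * (1 - \<gamma>) / 2) = E^2 / x * B ^ Suc k"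
  proof -
    have "exp (- real K * (1 - \<gamma>) / 2) = (H / E) ^ K"
      unfolding H_def E_def by (simp add: field_simps flip: exp_diff exp_of_nat_mult)
    moreover have "exp 1 = E ^ 2"
      unfolding E_def by (simp add: power2_eq_square flip: exp_add)
    ultimately show ?thesis
      unfolding B_def k_def using \<open>2 \<le> K\<close> by (simp add: power_mult_distrib power_divide)
  qed
  also have "\<dots> = E * H * (1 + \<gamma> / x) * B ^ k"
    unfolding B_def E_def using assms by (simp add: field_simps power2_eq_square)
  also have "\<dots> \<le> 9/10"
  proof (cases "x \<le> 1/8")
    case True
    have "2 * E * B = 2 * (\<gamma> + x) * H"
      unfolding B_def E_def by simp
    also have "\<dots> \<le> (20/33) * (33/20)"
      using True assms \<open>H \<le> E\<close> \<open>E \<le> 33/20\<close> \<open>1 \<le> H\<close> by (intro mult_mono) auto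
    finally have "(2 * E * B) ^ k \<le> 2 * E * B"
      using \<open>0 \<le> B\<close> \<open>2 \<le> K\<close> unfolding k_def E_def by (intro power_decreasing[of 1, simplified]) auto
    have "E * H * (1 + \<gamma> / x) * B ^ k \<le> E * H * (2 * (2 * E) ^ k) * B ^ k"
      using ratio \<open>0 \<le> B\<close> \<open>1 \<le> H\<close> unfolding k_def E_def by (intro mult_right_mono mult_left_mono) auto
    also have "\<dots> = 2 * E * H * (2 * E * B) ^ k"
      by (simp add: power_mult_distrib)
    also have "\<dots> \<le> 2 * E * H * (2 * E * B)"
      using \<open>(2 * E * B) ^ k \<le> 2 * E * B\<close> \<open>1 \<le> H\<close> unfolding E_def by (intro mult_left_mono) auto
    also have "\<dots> = 4 * E * H ^ 2 * (\<gamma> + x)"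
      unfolding B_def E_def by (simp add: power2_eq_square)
    also have "\<dots> \<le> 4 * (33/20) * (1002/1000) * (1/1000 + 1/8)"
      using assms True \<open>E \<le> 33/20\<close> \<open>H ^ 2 \<le> 1002/1000\<close> unfolding E_def
      by (intro mult_mono) auto
    also have "\<dots> \<le> 9/10"
      by simp
    finally show ?thesis .
  next
    case False
    have "\<gamma> / x \<le> 8 * \<gamma>"
      using False assms divide_left_mono[of "1/8" x \<gamma>] by simp
    have "B \<le> 1"
      unfolding B_def using assms \<open>H \<le> E\<close> \<open>1 \<le> H\<close> \<open>0 < E\<close> mult_mono[of "\<gamma> + x" 1 H E]
      by (simp add: divide_simps)
    then have "B ^ k \<le> B"
      using \<open>0 \<le> B\<close> \<open>2 \<le> K\<close> unfolding k_def by (intro power_decreasing[of 1, simplified]) auto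
    have "E * H * (1 + \<gamma> / x) * B ^ k \<le> E * H * (1 + 8 * \<gamma>) * B"
      using \<open>\<gamma> / x \<le> 8 * \<gamma>\<close> \<open>B ^ k \<le> B\<close> \<open>0 \<le> B\<close> \<open>1 \<le> H\<close> assms unfolding E_def
      by (intro mult_mono) auto
    also have "\<dots> = H ^ 2 * (1 + 8 * \<gamma>) * (\<gamma> + x)"
      unfolding B_def E_def by (simp add: power2_eq_square)
    also have "\<dots> \<le> (1002/1000) * (1 + 8/1000) * (1/1000 + 1/2)"
      using assms \<open>H ^ 2 \<le> 1002/1000\<close> by (intro mult_mono) auto
    also have "\<dots> \<le> 9/10"
      by simp
    finally show ?thesis .
  qed
  finally show ?thesis .
qed

lemma separation_weight_le:
  fixes n g m K :: nat and lam :: real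
  assumes "1 \<le> m" "2 * m \<le> n - g" "real g \<le> real n / 1000" "2 \<le> K"
    and "0 < lam" "lam \<le> 2 * real m"
    and ratio: "1 + real g / lam \<le> (2 * exp (1/2)) ^ (K - 1)"
  shows "real ((n - g) choose m) * (1 - real (n - g - m) / real n) ^ (K * m)
           * (1 - real m / real n) ^ (K * (n - g - m)) \<le> (9/10) ^ m"
proof -
  define r where "r = n - g"
  define x where "x = real m / real n"
  define \<gamma> where "\<gamma> = real g / real n"
  have "0 < real n" "g \<le> n" "2 * real m \<le> real r"
    using assms unfolding r_def by auto
  then have "r \<le> n" "real r = real n - real g" "0 < x" "x \<le> 1/2"
    using assms unfolding r_def x_def by (auto simp: field_simps)
  have base: "1 - real (r - m) / real n = \<gamma> + x"
    using \<open>0 < real n\<close> \<open>real r = real n - real g\<close> \<open>2 * real m \<le> real r\<close>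
    unfolding x_def \<gamma>_def by (simp add: of_nat_diff field_simps)
  have binom: "real (r choose m) \<le> (exp 1 / x) ^ m"
  proof -
    have "real (r choose m) \<le> (exp 1 * real r / real m) ^ m"
      using binomial_le_exp_power assms(1) .
    also have "\<dots> \<le> (exp 1 * real n / real m) ^ m"
      using \<open>r \<le> n\<close> by (intro power_mono divide_right_mono mult_left_mono) auto
    also have "exp 1 * real n / real m = exp 1 / x"
      unfolding x_def by simp
    finally show ?thesis .
  qed
  have tail: "(1 - x) ^ (K * (r - m)) \<le> exp (- real K * (1 - \<gamma>) / 2) ^ m"
  proof -
    have "(1 - x) ^ (K * (r - m)) \<le> exp (- x) ^ (K * (r - m))"
      using \<open>x \<le> 1/2\<close> exp_ge_add_one_self[of "- x"] by (intro power_mono) auto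
    also have "\<dots> = exp (- (x * real K * real (r - m)))"
      by (simp add: mult.commute flip: exp_of_nat_mult)
    also have "\<dots> \<le> exp (- (x * real K * (real r / 2)))"
    proof -
      have "real r / 2 \<le> real (r - m)"
        using \<open>2 * real m \<le> real r\<close> by (simp add: of_nat_diff)
      then show ?thesis
        using mult_left_mono[of _ _ "x * real K"] \<open>0 < x\<close> by simp
    qed
    also have "\<dots> = exp (- real K * (1 - \<gamma>) / 2) ^ m"
    proof -
      have "1 - \<gamma> = real r / real n"
        using \<open>0 < real n\<close> \<open>real r = real n - real g\<close> unfolding \<gamma>_def by (simp add: field_simps)
      then have "x * real K * (real r / 2) = real m * (real K * (1 - \<gamma>) / 2)"
        unfolding x_def by simp
      then show ?thesis
        by (simp flip: exp_of_nat_mult)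
    qed
    finally show ?thesis .
  qed
  have "exp 1 / x * (\<gamma> + x) ^ K * exp (- real K * (1 - \<gamma>) / 2) \<le> 9/10"
  proof (rule separation_rate_le)
    have "\<gamma> / x = real g / real m"
      using \<open>0 < real n\<close> unfolding x_def \<gamma>_def by simp
    also have "\<dots> \<le> real g / (lam / 2)"
      using assms by (intro divide_left_mono) auto
    finally have "\<gamma> / x \<le> 2 * (real g / lam)"
      by (simp add: mult.commute)
    moreover have "0 \<le> real g / lam"
      using \<open>0 < lam\<close> by simp
    ultimately show "1 + \<gamma> / x \<le> 2 * (2 * exp (1/2)) ^ (K - 1)"
      using ratio by linarith
  qed (use assms \<open>0 < real n\<close> \<open>0 < x\<close> \<open>x \<le> 1/2\<close> in \<open>auto simp: \<gamma>_def field_simps\<close>)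
  then have "(exp 1 / x) ^ m * ((\<gamma> + x) ^ K) ^ m * exp (- real K * (1 - \<gamma>) / 2) ^ m \<le> (9/10) ^ m"
    using \<open>0 < x\<close> \<open>0 < real n\<close> unfolding \<gamma>_def
    by (simp add: power_mono flip: power_mult_distrib)
  moreover have "real (r choose m) * (\<gamma> + x) ^ (K * m) * (1 - x) ^ (K * (r - m))
      \<le> (exp 1 / x) ^ m * ((\<gamma> + x) ^ K) ^ m * exp (- real K * (1 - \<gamma>) / 2) ^ m"
    using binom tail \<open>0 < x\<close> \<open>x \<le> 1/2\<close> unfolding \<gamma>_def
    by (intro mult_mono) (auto simp: power_mult)
  ultimately show ?thesis
    using base unfolding r_def x_def by (simp add: diff_diff_left)
qed

lemma prob_small_cmax_le:
  fixes n K g :: nat and lam :: real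
  assumes "K < n" "2 \<le> K" "real g \<le> real n / 1000" "0 < lam"
    and ratio: "1 + real g / lam \<le> (2 * exp (1/2)) ^ (K - 1)"
    and "D \<subseteq> {1..n}" "card D = g"
  shows "measure_pmf.prob (selection_pmf n K)
           {G. real (cmax_size G ({1..n} - D)) \<le> real n - real g - lam}
         \<le> (real n + 1) * (9/10) powr (lam / 2)"
proof -
  define R where "R = {1..n} - D"
  define r where "r = n - g"
  define M where "M = {m. lam \<le> 2 * real m \<and> 2 * m \<le> r}"
  define F where "F m = {S. S \<subseteq> R \<and> card S = m}" for m
  define P where "P = measure_pmf.prob (selection_pmf n K)"
  have "finite R" "R \<subseteq> {1..n}"
    unfolding R_def by auto
  have "card R = r"
    unfolding R_def r_def using assms by (simp add: card_Diff_subset finite_subset)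
  have "g \<le> n"
    using assms by (simp add: field_simps)
  then have "real r = real n - real g"
    unfolding r_def by simp
  have "M \<subseteq> {0..r}"
    unfolding M_def by auto
  then have "finite M"
    by (rule finite_subset) simp
  have "finite (F m)" for m
    unfolding F_def using \<open>finite R\<close> by (rule_tac finite_subset[of _ "Pow R"]) auto
  have "{G. real (cmax_size G R) \<le> real r - lam} \<subseteq> (\<Union>m\<in>M. \<Union>S\<in>F m. {G. separated G R S})"
  proof
    fix G assume "G \<in> {G. real (cmax_size G R) \<le> real r - lam}"
    then have "real (card (component G R v)) \<le> real (card R) - lam" if "v \<in> R" for v
      using card_component_le_cmax_size[OF \<open>finite R\<close> that, of G] \<open>card R = r\<close> by simp
    moreover have "lam \<le> real (card R)"
      using \<open>G \<in> _\<close> \<open>card R = r\<close> by simp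
    ultimately obtain S where "separated G R S" "lam \<le> 2 * real (card S)" "2 * card S \<le> card R"
      using exists_balanced_separated[OF \<open>finite R\<close> \<open>0 < lam\<close>] by blast
    then show "G \<in> (\<Union>m\<in>M. \<Union>S\<in>F m. {G. separated G R S})"
      unfolding M_def F_def separated_def using \<open>card R = r\<close> by auto
  qed
  then have "P {G. real (cmax_size G R) \<le> real r - lam}
      \<le> P (\<Union>m\<in>M. \<Union>S\<in>F m. {G. separated G R S})"
    unfolding P_def by (intro measure_pmf.finite_measure_mono) auto
  also have "\<dots> \<le> (\<Sum>m\<in>M. P (\<Union>S\<in>F m. {G. separated G R S}))"
    unfolding P_def using \<open>finite M\<close> by (intro measure_pmf.finite_measure_subadditive_finite) auto
  also have "\<dots> \<le> (\<Sum>m\<in>M. \<Sum>S\<in>F m. P {G. separated G R S})"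
    unfolding P_def using \<open>finite (F _)\<close>
    by (intro sum_mono measure_pmf.finite_measure_subadditive_finite) auto
  also have "\<dots> \<le> (\<Sum>m\<in>M. \<Sum>S\<in>F m. (1 - real (r - m) / real n) ^ (K * m)
                                        * (1 - real m / real n) ^ (K * (r - m)))"
    unfolding P_def F_def using prob_separated_le[OF \<open>K < n\<close> \<open>R \<subseteq> {1..n}\<close>] \<open>card R = r\<close>
    by (intro sum_mono) auto
  also have "\<dots> = (\<Sum>m\<in>M. real (r choose m) * (1 - real (r - m) / real n) ^ (K * m)
                                        * (1 - real m / real n) ^ (K * (r - m)))"
    unfolding F_def using n_subsets[OF \<open>finite R\<close>] \<open>card R = r\<close> by (simp add: mult.assoc)
  also have "\<dots> \<le> (\<Sum>m\<in>M. (9/10) ^ m)"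
  proof (intro sum_mono)
    fix m assume "m \<in> M"
    then have "1 \<le> m"
      unfolding M_def using \<open>0 < lam\<close> by (cases m) auto
    then show "real (r choose m) * (1 - real (r - m) / real n) ^ (K * m)
                 * (1 - real m / real n) ^ (K * (r - m)) \<le> (9/10) ^ m"
      unfolding r_def
      by (rule separation_weight_le) (use \<open>m \<in> M\<close> assms in \<open>auto simp: M_def r_def\<close>)
  qed
  also have "\<dots> \<le> (\<Sum>m\<in>M. (9/10) powr (lam / 2))"
    unfolding M_def by (intro sum_mono) (auto simp: powr_realpow[symmetric] intro: powr_mono')
  also have "\<dots> \<le> (real n + 1) * (9/10) powr (lam / 2)"
  proof -
    have "card M \<le> n + 1"
      using card_mono[OF _ \<open>M \<subseteq> {0..r}\<close>] unfolding r_def by simp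
    then show ?thesis
      by (simp add: mult_right_mono)
  qed
  finally show ?thesis
    unfolding P_def R_def \<open>real r = real n - real g\<close> .
qed

lemma tendsto_powr_sqrt_zero:
  fixes a :: real
  assumes "0 < a"
  shows "(\<lambda>n. (real n + 1) * (9/10) powr (a * sqrt (real n))) \<longlonglongrightarrow> 0"
proof -
  define b where "b = a * ln (10/9)"
  have "0 < b"
    unfolding b_def using assms by simp
  have "(9/10) powr (a * sqrt (real n)) = exp (- (b * sqrt (real n)))" for n
    unfolding powr_def b_def by (simp add: ln_div algebra_simps)
  moreover have "(\<lambda>n. (real n + 1) * exp (- (b * sqrt (real n)))) \<longlonglongrightarrow> 0"
    by (insert \<open>0 < b\<close>) real_asymp
  ultimately show ?thesis
    by simp
qed

lemma r3_less_imp: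
  fixes K g :: nat and lam :: real
  assumes "0 < lam" "r3 (real g) lam < real K"
  shows "2 \<le> K" "1 + real g / lam \<le> (2 * exp (1/2)) ^ (K - 1)"
proof -
  define c :: real where "c = ln 2 + 1/2"
  define L where "L = ln (1 + real g / lam)"
  have "0 < ln (2 :: real)"
    by simp
  then have "0 < c"
    unfolding c_def by linarith
  have "0 \<le> L"
    unfolding L_def using assms(1) by simp
  have "L / c < real K - 1"
    using assms(2) unfolding r3_def L_def c_def by simp
  moreover have "0 \<le> L / c"
    using \<open>0 \<le> L\<close> \<open>0 < c\<close> by simp
  ultimately show "2 \<le> K"
    by linarith
  have "L < real (K - 1) * c"
    using \<open>L / c < real K - 1\<close> \<open>0 < c\<close> \<open>2 \<le> K\<close> by (simp add: divide_less_eq of_nat_diff)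
  then have "exp L < exp c ^ (K - 1)"
    by (simp flip: exp_of_nat_mult)
  moreover have "exp L = 1 + real g / lam"
    unfolding L_def using assms(1) by (simp add: add_pos_nonneg)
  moreover have "exp c = 2 * exp (1/2)"
    unfolding c_def by (simp add: exp_add)
  ultimately show "1 + real g / lam \<le> (2 * exp (1/2)) ^ (K - 1)"
    by simp
qed

lemma measure_pair_pmf_le:
  assumes "\<And>y. y \<in> set_pmf q \<Longrightarrow> measure_pmf.prob p {x. (x, y) \<in> A} \<le> e"
  shows "measure_pmf.prob (pair_pmf p q) A \<le> e"
proof -
  obtain y where "y \<in> set_pmf q" using set_pmf_not_empty by fast
  then have "0 \<le> e" using assms order_trans measure_nonneg by blast
  have "pair_pmf p q = bind_pmf q (\<lambda>y. map_pmf (\<lambda>x. (x, y)) p)"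
    by (subst pair_commute_pmf) (simp add: pair_pmf_def map_bind_pmf map_pmf_def bind_assoc_pmf bind_return_pmf)
  then have "emeasure (pair_pmf p q) A = (\<integral>\<^sup>+y. emeasure p {x. (x, y) \<in> A} \<partial>q)"
    by (simp add: emeasure_map_pmf vimage_def)
  also have "\<dots> \<le> ennreal e"
    using assms \<open>0 \<le> e\<close> by (intro measure_pmf.nn_integral_le_const AE_pmfI)
      (simp_all add: measure_pmf.emeasure_eq_measure ennreal_leI)
  finally show ?thesis
    using \<open>0 \<le> e\<close> by (simp add: measure_pmf.emeasure_eq_measure)
qed

lemma prob_cmax_gt_ge:
  fixes n K g :: nat and lam :: real
  assumes "K < n" "real g \<le> real n / 1000" "0 < lam" "r3 (real g) lam < real K"
  shows "1 - (real n + 1) * (9/10) powr (lam / 2) \<le> prob_cmax_gt n K g (real n - real g - lam)"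
proof -
  define p where "p = pair_pmf (selection_pmf n K) (deletion_pmf n g)"
  define A where "A = {(G, D). real (cmax_size G ({1..n} - D)) \<le> real n - real g - lam}"
  have "g \<le> n"
    using assms by (simp add: field_simps)
  have "measure_pmf.prob p A \<le> (real n + 1) * (9/10) powr (lam / 2)"
    unfolding p_def A_def
  proof (rule measure_pair_pmf_le)
    fix D assume "D \<in> set_pmf (deletion_pmf n g)"
    then have "D \<subseteq> {1..n}" "card D = g"
      using set_deletion_pmf[OF \<open>g \<le> n\<close>] by auto
    then show "measure_pmf.prob (selection_pmf n K)
        {G. (G, D) \<in> {(G, D). real (cmax_size G ({1..n} - D)) \<le> real n - real g - lam}}
        \<le> (real n + 1) * (9/10) powr (lam / 2)"
      using prob_small_cmax_le r3_less_imp assms by simp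
  qed
  moreover have "prob_cmax_gt n K g (real n - real g - lam) = 1 - measure_pmf.prob p A"
    unfolding prob_cmax_gt_def p_def A_def
    by (subst measure_pmf.prob_compl[symmetric]) (auto intro: arg_cong[where f = "measure_pmf.prob _"])
  ultimately show ?thesis
    by simp
qed

theorem theorem3p3:
  fixes gam :: "nat \<Rightarrow> nat" and lam :: "nat \<Rightarrow> real" and K :: "nat \<Rightarrow> nat"
  assumes "(\<lambda>n. real (gam n)) \<in> o(\<lambda>n. real n)"
    and "lam \<in> \<Omega>(\<lambda>n. sqrt (real n))"
    and "\<forall>n. lam n > 0"
    and "eventually (\<lambda>n. K n < n) sequentially"
    and "\<forall>n. real (K n) > r3 (real (gam n)) (lam n)"
  shows "(\<lambda>n. prob_cmax_gt n (K n) (gam n) (real n - real (gam n) - lam n)) \<longlonglongrightarrow> 1"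
proof -
  obtain c where "c > 0"
    and lam_norm: "eventually (\<lambda>n. norm (lam n) \<ge> c * norm (sqrt (real n))) sequentially"
    using assms(2) by (elim landau_omega.bigE) auto
  have lam_ge: "eventually (\<lambda>n. c * sqrt (real n) \<le> lam n) sequentially"
    using lam_norm by (rule eventually_mono) (use assms(3) in \<open>simp add: abs_of_pos\<close>)
  have "eventually (\<lambda>n. real (gam n) \<le> real n / 1000) sequentially"
    using landau_o.smallD[OF assms(1), of "1/1000"] by simp
  with lam_ge assms(4)
  have lower: "eventually (\<lambda>n. 1 - (real n + 1) * (9/10) powr (c / 2 * sqrt (real n))
          \<le> prob_cmax_gt n (K n) (gam n) (real n - real (gam n) - lam n)) sequentially"
  proof eventually_elim
    case (elim n)
    have "1 - (real n + 1) * (9/10) powr (lam n / 2)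
        \<le> prob_cmax_gt n (K n) (gam n) (real n - real (gam n) - lam n)"
      using elim assms(3,5) by (intro prob_cmax_gt_ge) auto
    moreover have "(real n + 1) * (9/10) powr (lam n / 2)
        \<le> (real n + 1) * (9/10) powr (c / 2 * sqrt (real n))"
      using elim by (intro mult_left_mono powr_mono') auto
    ultimately show ?case
      by linarith
  qed
  have upper: "eventually (\<lambda>n. prob_cmax_gt n (K n) (gam n) (real n - real (gam n) - lam n) \<le> 1) sequentially"
    unfolding prob_cmax_gt_def by simp
  have "(\<lambda>n. 1 - (real n + 1) * (9/10) powr (c / 2 * sqrt (real n))) \<longlonglongrightarrow> 1 - 0"
    using \<open>c > 0\<close> by (intro tendsto_diff tendsto_const tendsto_powr_sqrt_zero) simp
  then show ?thesis
    using tendsto_sandwich[OF lower upper] by simp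
qed

end
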